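(* Let $R_{ij},R_{ji},R_i,R_j\in SO(3)$. (1) If $\{R_{ij}^T g R_{ji} : g\in \mathbb{T}\}=\{R_i^T g R_j : g\in \mathbb{T}\}$, then there exist $g_{ij},g_{ji}\in\mathbb{T}$ and $h_{ij}\in\mathbb{O}$ such that $R_{ij}=h_{ij}g_{ij}R_i$ and $R_{ji}=h_{ij}g_{ji}R_j$. (2) If $\{R_{ij}^T g R_{ji} : g\in \mathbb{O}\}=\{R_i^T g R_j : g\in \mathbb{O}\}$, then there exist $g_{ij},g_{ji}\in\mathbb{O}$ such that $R_{ij}=g_{ij}R_i$ and $R_{ji}=g_{ji}R_j$.
   Context: In the fixed coordinate system, $\mathbb{O}$ is the group of all $3\times 3$ signed permutation matrices (exactly one nonzero entry, equal to $\pm1$, in each row and column) of determinant $1$ (24 elements), and $\mathbb{T}\subset\mathbb{O}$ is the 12-element subgroup of matrices $DP$ with $P$ the permutation matrix of an even permutation of $\{1,2,3\}$ and $D$ diagonal with entries $\pm1$ and $\det D=1$. *)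

theory Defs
  imports "HOL-Analysis.Analysis" "HOL-Combinatorics.Permutations"
begin

type_synonym mat3 = "real^3^3"

definition SO3 :: "mat3 set" where
  "SO3 = {R. transpose R ** R = mat 1 \<and> det R = 1}"

definition signed_perm_matrix :: "mat3 \<Rightarrow> bool" where
  "signed_perm_matrix A \<longleftrightarrow>
     (\<forall>i. \<exists>!j. A $ i $ j \<noteq> 0) \<and> (\<forall>j. \<exists>!i. A $ i $ j \<noteq> 0) \<and>
     (\<forall>i j. A $ i $ j \<in> {-1, 0, 1})"

definition octahedral_group :: "mat3 set" where
  "octahedral_group = {A. signed_perm_matrix A \<and> det A = 1}"

definition perm_matrix :: "(3 \<Rightarrow> 3) \<Rightarrow> mat3" where
  "perm_matrix p = (\<chi> i j. if p j = i then 1 else 0)"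

definition tetrahedral_group :: "mat3 set" where
  "tetrahedral_group = {D ** perm_matrix p | D p.
      p permutes (UNIV :: 3 set) \<and> evenperm p \<and>
      (\<forall>i j. i \<noteq> j \<longrightarrow> D $ i $ j = 0) \<and> (\<forall>i. D $ i $ i \<in> {-1, 1}) \<and> det D = 1}"

end

theory Submission
  imports Defs
begin

text \<open>Put \<open>A = Rij Ri\<^sup>T\<close> and \<open>B = Rji Rj\<^sup>T\<close>. The coset equality says \<open>A\<^sup>T g B \<in> G\<close>
for all \<open>g \<in> G\<close>; with \<open>g = 1\<close> this gives \<open>c = A\<^sup>T B \<in> G\<close>, and then
\<open>A\<^sup>T g A = (A\<^sup>T g B) c\<^sup>T\<close>, so \<open>A\<close> conjugates \<open>G\<close> into the octahedral group and
\<open>Rij = A Ri\<close>, \<open>Rji = A c Rj\<close>. It remains to see that such an \<open>A\<close> is a signed permutation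
matrix, i.e. has all entries in \<open>{-1, 0, 1}\<close>. Conjugating the half turns \<open>diag(\<plusminus>1)\<close> gives
diagonal entries \<open>2 A\<^sub>m\<^sub>k\<^sup>2 - 1\<close>, so every \<open>A\<^sub>m\<^sub>k\<^sup>2\<close> lies in \<open>{0, 1/2, 1}\<close>.
For the cyclic permutation matrix \<open>P\<close>, the rows of \<open>P A = A (A\<^sup>T P A)\<close> are rows of \<open>A\<close> times
a signed permutation matrix, so one row of \<open>A\<close> with entries in \<open>{-1, 0, 1}\<close> forces all of them
to be such rows. Otherwise all \<open>A\<^sub>m\<^sub>k\<^sup>2\<close> lie in \<open>{0, 1/2}\<close>, which no orthogonal
\<open>3 \<times> 3\<close> matrix allows.\<close>

definition ternary :: "real^'n \<Rightarrow> bool" where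
  "ternary x \<longleftrightarrow> (\<forall>i. x $ i \<in> {-1, 0, 1})"

definition ternary_matrix :: "real^'n^'m \<Rightarrow> bool" where
  "ternary_matrix A \<longleftrightarrow> (\<forall>i. ternary (A $ i))"

lemma ternary_unit_iff:
  assumes "ternary x"
  shows "x \<bullet> x = 1 \<longleftrightarrow> (\<exists>!k. x $ k \<noteq> 0)"
proof -
  have "x \<bullet> x = (\<Sum>i\<in>UNIV. if x $ i \<noteq> 0 then 1 else 0)"
    unfolding inner_vec_def
  proof (rule sum.cong)
    fix i show "x $ i \<bullet> x $ i = (if x $ i \<noteq> 0 then 1 else 0)"
      using assms by (auto simp: ternary_def dest: spec[of _ i])
  qed simp
  also have "\<dots> = real (card {i. x $ i \<noteq> 0})"
    by (simp add: sum.If_cases)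
  finally have "x \<bullet> x = 1 \<longleftrightarrow> card {i. x $ i \<noteq> 0} = 1"
    by simp
  also have "\<dots> \<longleftrightarrow> (\<exists>!k. x $ k \<noteq> 0)"
    using card_1_singleton_iff[of "{i. x $ i \<noteq> 0}"] by (auto simp: Ex1_def set_eq_iff)
  finally show ?thesis .
qed

lemma inner_unique_nonzero:
  fixes x y :: "real^'n"
  assumes "\<And>i. i \<noteq> k \<Longrightarrow> x $ i = 0"
  shows "x \<bullet> y = x $ k * y $ k"
proof -
  have "x \<bullet> y = (\<Sum>i\<in>UNIV. if i = k then x $ k * y $ k else 0)"
    unfolding inner_vec_def by (rule sum.cong) (auto simp: assms)
  then show ?thesis by simp
qed

lemma ternary_inner_unit:
  assumes "ternary x" "x \<bullet> x = 1" "ternary y"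
  shows "x \<bullet> y \<in> {-1, 0, 1}"
proof -
  obtain k where k: "\<And>i. i \<noteq> k \<Longrightarrow> x $ i = 0"
    using assms(1,2) ternary_unit_iff by blast
  have "x \<bullet> y = x $ k * y $ k"
    using k by (rule inner_unique_nonzero)
  moreover have "x $ k \<in> {-1, 0, 1}" "y $ k \<in> {-1, 0, 1}"
    using assms(1,3) by (simp_all add: ternary_def)
  then have "x $ k * y $ k \<in> {-1, 0, 1}"
    by auto
  ultimately show ?thesis
    by simp
qed

lemma row_matrix_mult: "(A ** B) $ i = A $ i v* B"
  by (simp add: matrix_matrix_mult_def vector_matrix_mult_def vec_eq_iff mult.commute)

lemma vector_matrix_mult_component: "(x v* B) $ j = x \<bullet> column j B"
  by (simp add: vector_matrix_mult_def inner_vec_def column_def)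

lemma ternary_matrix_column: "ternary_matrix A \<Longrightarrow> ternary (column j A)"
  by (simp add: ternary_matrix_def ternary_def column_def)

lemma row_eq_nth: "row i A = A $ i"
  by (simp add: row_def vec_eq_iff)

lemma orthogonal_matrix_row_unit:
  fixes A :: "real^'n^'n"
  shows "orthogonal_matrix A \<Longrightarrow> A $ i \<bullet> A $ i = 1"
  by (simp add: orthogonal_matrix_orthonormal_rows row_eq_nth norm_eq_1)

lemma ternary_vector_matrix_mult:
  assumes "ternary x" "x \<bullet> x = 1" "ternary_matrix B"
  shows "ternary (x v* B)"
proof -
  have "x \<bullet> column j B \<in> {-1, 0, 1}" for j
    using assms(1,2) ternary_matrix_column[OF assms(3)] by (rule ternary_inner_unit)
  then show ?thesis
    by (simp add: ternary_def vector_matrix_mult_component)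
qed

lemma ternary_matrix_mult:
  fixes A B :: "real^'n^'n"
  assumes "ternary_matrix A" "orthogonal_matrix A" "ternary_matrix B"
  shows "ternary_matrix (A ** B)"
  unfolding ternary_matrix_def row_matrix_mult
proof
  fix i
  show "ternary (A $ i v* B)"
    using assms by (intro ternary_vector_matrix_mult) (auto simp: ternary_matrix_def orthogonal_matrix_row_unit)
qed

lemma orthogonal_matrix_iff_ternary_unique_nonzero:
  fixes A :: "real^'n^'n"
  assumes "ternary_matrix A"
  shows "orthogonal_matrix A \<longleftrightarrow> (\<forall>i. \<exists>!j. A $ i $ j \<noteq> 0) \<and> (\<forall>j. \<exists>!i. A $ i $ j \<noteq> 0)"
proof
  assume orth: "orthogonal_matrix A"
  have "A $ i \<bullet> A $ i = 1" for i
    using orth by (rule orthogonal_matrix_row_unit)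
  moreover have "column j A \<bullet> column j A = 1" for j
    using orthogonal_matrix_row_unit[of "transpose A" j] orth by (simp flip: row_eq_nth)
  moreover have "ternary (A $ i)" "ternary (column j A)" for i j
    using assms ternary_matrix_column by (auto simp: ternary_matrix_def)
  ultimately have "\<exists>!j. A $ i $ j \<noteq> 0" "\<exists>!i. column j A $ i \<noteq> 0" for i j
    by (simp_all add: ternary_unit_iff)
  then show "(\<forall>i. \<exists>!j. A $ i $ j \<noteq> 0) \<and> (\<forall>j. \<exists>!i. A $ i $ j \<noteq> 0)"
    by (simp add: column_def)
next
  assume uniq: "(\<forall>i. \<exists>!j. A $ i $ j \<noteq> 0) \<and> (\<forall>j. \<exists>!i. A $ i $ j \<noteq> 0)"
  have unit: "norm (A $ i) = 1" for i
    using uniq assms by (simp add: norm_eq_1 ternary_unit_iff ternary_matrix_def)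
  have orth: "A $ i \<bullet> A $ k = 0" if "i \<noteq> k" for i k
  proof -
    have "A $ i $ j = 0 \<or> A $ k $ j = 0" for j
      using uniq that by blast
    then have "\<forall>j\<in>UNIV. A $ i $ j * A $ k $ j = 0"
      by auto
    then show ?thesis
      unfolding inner_vec_def inner_real_def by (rule sum.neutral)
  qed
  show "orthogonal_matrix A"
    unfolding orthogonal_matrix_orthonormal_rows orthogonal_def row_eq_nth using unit orth by blast
qed

lemma signed_perm_matrix_iff: "signed_perm_matrix A \<longleftrightarrow> ternary_matrix A \<and> orthogonal_matrix A"
proof -
  have "(\<forall>i j. A $ i $ j \<in> {-1, 0, 1}) \<longleftrightarrow> ternary_matrix A"
    by (simp add: ternary_matrix_def ternary_def)
  then show ?thesis
    unfolding signed_perm_matrix_def using orthogonal_matrix_iff_ternary_unique_nonzero[of A] by argo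
qed

lemma octahedral_group_iff: "A \<in> octahedral_group \<longleftrightarrow> ternary_matrix A \<and> rotation_matrix A"
  by (auto simp: octahedral_group_def signed_perm_matrix_iff rotation_matrix_def)

lemma ternary_matrix_transpose: "ternary_matrix (transpose A) \<longleftrightarrow> ternary_matrix A"
  by (auto simp: ternary_matrix_def ternary_def transpose_def)

lemma octahedral_group_mult:
  "A \<in> octahedral_group \<Longrightarrow> B \<in> octahedral_group \<Longrightarrow> A ** B \<in> octahedral_group"
  by (simp add: octahedral_group_iff rotation_matrix_def ternary_matrix_mult orthogonal_matrix_mul det_mul)

lemma octahedral_group_transpose: "A \<in> octahedral_group \<Longrightarrow> transpose A \<in> octahedral_group"
  by (simp add: octahedral_group_iff rotation_matrix_def ternary_matrix_transpose)

lemma perm_matrix_id: "perm_matrix id = mat 1"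
  by (simp add: perm_matrix_def mat_def vec_eq_iff eq_commute)

lemma det_perm_matrix:
  assumes "p permutes UNIV"
  shows "det (perm_matrix p) = of_int (sign p)"
proof -
  have "perm_matrix p = (\<chi> i j. mat 1 $ i $ p j)"
    by (simp add: perm_matrix_def mat_def vec_eq_iff eq_commute)
  then show ?thesis
    by (simp add: det_permute_columns[OF assms])
qed

lemma perm_matrix_in_octahedral_group:
  assumes "p permutes UNIV" "evenperm p"
  shows "perm_matrix p \<in> octahedral_group"
proof -
  have "signed_perm_matrix (perm_matrix p)"
    using assms(1) by (simp add: signed_perm_matrix_def perm_matrix_def permutes_univ)
  moreover have "det (perm_matrix p) = 1"
    using assms by (simp add: det_perm_matrix sign_def)
  ultimately show ?thesis
    by (simp add: octahedral_group_def)
qed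

lemma diagonal_in_octahedral_group:
  assumes "\<forall>i j. i \<noteq> j \<longrightarrow> D $ i $ j = 0" "\<forall>i. D $ i $ i \<in> {-1, 1}" "det D = 1"
  shows "D \<in> octahedral_group"
proof -
  have "D $ i $ j \<noteq> 0 \<longleftrightarrow> i = j" for i j
    using assms(1) assms(2)[rule_format, of j] by auto
  moreover have "D $ i $ j \<in> {-1, 0, 1}" for i j
    using assms(1) assms(2)[rule_format, of j] by (cases "i = j") auto
  ultimately have "signed_perm_matrix D"
    by (simp add: signed_perm_matrix_def)
  then show ?thesis
    using assms(3) by (simp add: octahedral_group_def)
qed

lemma tetrahedral_subset_octahedral_group: "tetrahedral_group \<subseteq> octahedral_group"
proof
  fix M assume "M \<in> tetrahedral_group"
  then obtain D p where "M = D ** perm_matrix p" "p permutes UNIV" "evenperm p"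
    "\<forall>i j. i \<noteq> j \<longrightarrow> D $ i $ j = 0" "\<forall>i. D $ i $ i \<in> {-1, 1}" "det D = 1"
    unfolding tetrahedral_group_def mem_Collect_eq by (elim exE conjE) (rule that)
  then show "M \<in> octahedral_group"
    by (simp add: octahedral_group_mult diagonal_in_octahedral_group perm_matrix_in_octahedral_group)
qed

lemma tetrahedral_groupI:
  assumes "\<forall>i j. i \<noteq> j \<longrightarrow> D $ i $ j = 0" "\<forall>i. D $ i $ i \<in> {-1, 1}" "det D = 1"
    and "p permutes UNIV" "evenperm p"
  shows "D ** perm_matrix p \<in> tetrahedral_group"
  unfolding tetrahedral_group_def mem_Collect_eq using assms by (intro exI[of _ D] exI[of _ p]) simp

definition half_turn :: "3 \<Rightarrow> mat3" where
  "half_turn m = (\<chi> i j. if i = j then (if i = m then 1 else -1) else 0)"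

definition cyclic_perm :: "3 \<Rightarrow> 3" where
  "cyclic_perm = Transposition.transpose 1 2 \<circ> Transposition.transpose 2 3"

lemma cyclic_perm_permutes: "cyclic_perm permutes UNIV"
  unfolding cyclic_perm_def by (intro permutes_compose permutes_swap_id) simp_all

lemma evenperm_cyclic_perm: "evenperm cyclic_perm"
  unfolding cyclic_perm_def by (simp add: evenperm_comp evenperm_swap permutation_swap_id)

lemma cyclic_perm_simps: "cyclic_perm 1 = 2" "cyclic_perm 2 = 3" "cyclic_perm 3 = 1"
  by (simp_all add: cyclic_perm_def Transposition.transpose_def)

lemma inv_cyclic_perm_simps: "inv cyclic_perm 1 = 3" "inv cyclic_perm 2 = 1" "inv cyclic_perm 3 = 2"
  by (simp_all add: permutes_inv_eq[OF cyclic_perm_permutes] cyclic_perm_simps)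

lemma det_half_turn: "det (half_turn m) = 1"
proof -
  consider "m = 1" | "m = 2" | "m = 3"
    using exhaust_3 by blast
  then show ?thesis
    unfolding det_3 by cases (simp_all add: half_turn_def)
qed

lemma half_turn_in_tetrahedral_group: "half_turn m \<in> tetrahedral_group"
  using tetrahedral_groupI[of "half_turn m" id] det_half_turn
  by (simp add: half_turn_def perm_matrix_id)

lemma mat_1_diagonal: "\<forall>i j. i \<noteq> j \<longrightarrow> (mat 1 :: mat3) $ i $ j = 0" "\<forall>i. (mat 1 :: mat3) $ i $ i \<in> {-1, 1}"
  by (simp_all add: mat_def)

lemma cyclic_perm_matrix_in_tetrahedral_group: "perm_matrix cyclic_perm \<in> tetrahedral_group"
  using tetrahedral_groupI[OF mat_1_diagonal det_I cyclic_perm_permutes evenperm_cyclic_perm] by simp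

lemma id_in_tetrahedral_group: "mat 1 \<in> tetrahedral_group"
  using tetrahedral_groupI[OF mat_1_diagonal det_I, of id] by (simp add: perm_matrix_id permutes_id)

lemma perm_matrix_mult_row:
  assumes "p permutes UNIV"
  shows "(perm_matrix p ** A) $ i = A $ inv p i"
proof -
  have "(perm_matrix p ** A) $ i $ k = (\<Sum>j\<in>UNIV. if inv p i = j then A $ j $ k else 0)" for k
    unfolding matrix_matrix_mult_def perm_matrix_def
    by (auto simp: permutes_inv_eq[OF assms] intro: sum.cong)
  then show ?thesis
    by (simp add: vec_eq_iff)
qed

lemma half_turn_conjugate_diagonal:
  fixes A :: mat3
  assumes "orthogonal_matrix A"
  shows "(transpose A ** half_turn m ** A) $ k $ k = 2 * (A $ m $ k)^2 - 1"
proof -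
  have "orthogonal_matrix (transpose A)"
    using assms by simp
  from orthogonal_matrix_row_unit[OF this, of k]
  have unit: "(A $ 1 $ k)^2 + (A $ 2 $ k)^2 + (A $ 3 $ k)^2 = 1"
    by (simp add: inner_vec_def sum_3 transpose_def power2_eq_square)
  consider "m = 1" | "m = 2" | "m = 3"
    using exhaust_3 by blast
  then show ?thesis
    by cases (use unit in \<open>simp_all add: matrix_matrix_mult_def sum_3 transpose_def half_turn_def
      power2_eq_square algebra_simps\<close>)
qed

lemma ternary_if_unit_component:
  fixes x :: "real^'n"
  assumes "x \<bullet> x = 1" "(x $ k)^2 = 1"
  shows "ternary x"
proof -
  have "x \<bullet> x = (x $ k)^2 + (\<Sum>i\<in>UNIV - {k}. (x $ i)^2)"
    by (simp add: inner_vec_def power2_eq_square sum.remove)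
  then have "(\<Sum>i\<in>UNIV - {k}. (x $ i)^2) = 0"
    using assms by simp
  then have "x $ i = 0" if "i \<noteq> k" for i
    using that by (simp add: sum_nonneg_eq_0_iff)
  moreover have "x $ k \<in> {-1, 1}"
    using assms(2) by (auto simp: power2_eq_1_iff)
  ultimately show ?thesis
    unfolding ternary_def by (metis insertCI insertE)
qed

lemma det_in_Ints:
  fixes A :: "real^'n^'n"
  assumes "\<And>i j. A $ i $ j \<in> \<int>"
  shows "det A \<in> \<int>"
  unfolding det_def using assms by (intro Ints_sum Ints_mult Ints_prod Ints_of_int)

lemma int_square_neq_8: "(z::int)^2 \<noteq> 8"
proof
  assume z: "z^2 = 8"
  show False
  proof (cases "\<bar>z\<bar> \<le> 2")
    case True
    then have "\<bar>z\<bar>^2 \<le> 2^2" by (intro power_mono) auto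
    then show False using z by simp
  next
    case False
    then have "3^2 \<le> \<bar>z\<bar>^2" by (intro power_mono) auto
    then show False using z by simp
  qed
qed

lemma not_orthogonal_matrix_half_squares:
  fixes A :: mat3
  assumes "orthogonal_matrix A" "\<And>i j. (A $ i $ j)^2 \<in> {0, 1/2}"
  shows False
proof -
  txt \<open>\<open>B = \<surd>2 A\<close> would be an integer matrix with \<open>B\<^sup>T B = 2 I\<close>, so \<open>det B\<close> would be an
    integer with square \<open>8\<close>.\<close>
  define B where "B = sqrt 2 *\<^sub>R A"
  have "B $ i $ j \<in> \<int>" for i j
  proof -
    have "(B $ i $ j)^2 = 2 * (A $ i $ j)^2"
      by (simp add: B_def power_mult_distrib)
    then have "(B $ i $ j)^2 \<in> {0, 1}"
      using assms(2)[of i j] by auto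
    then have "B $ i $ j \<in> {-1, 0, 1}"
      by (auto simp: power2_eq_1_iff)
    then show ?thesis
      by auto
  qed
  then obtain z where z: "det B = of_int z"
    using det_in_Ints Ints_cases by metis
  have "transpose B ** B = mat 2"
    using assms(1)
    by (simp add: B_def transpose_scalar matrix_scalar_ac scalar_matrix_assoc[symmetric]
        orthogonal_matrix mat_def vec_eq_iff)
  moreover have "det (mat 2 :: mat3) = 8"
    by (simp add: det_3 mat_def)
  ultimately have "det B * det B = 8"
    by (metis det_mul det_transpose)
  then have "z^2 = 8"
    using z by (simp add: power2_eq_square flip: of_int_mult)
  then show False
    using int_square_neq_8 by blast
qed

lemma ternary_matrix_if_conjugates_ternary:
  fixes A :: mat3
  assumes orth: "orthogonal_matrix A"
    and half_turn: "\<And>m. ternary_matrix (transpose A ** half_turn m ** A)"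
    and cyclic: "ternary_matrix (transpose A ** perm_matrix cyclic_perm ** A)"
  shows "ternary_matrix A"
proof -
  let ?P = "perm_matrix cyclic_perm"
  have squares: "(A $ m $ k)^2 \<in> {0, 1/2, 1}" for m k
  proof -
    have "(transpose A ** half_turn m ** A) $ k $ k \<in> {-1, 0, 1}"
      using half_turn[of m] unfolding ternary_matrix_def ternary_def by blast
    then have "2 * (A $ m $ k)^2 - 1 \<in> {-1, 0, 1}"
      by (simp only: half_turn_conjugate_diagonal[OF orth])
    then show ?thesis
      by auto
  qed
  have spread: "ternary (A $ inv cyclic_perm m)" if "ternary (A $ m)" for m
  proof -
    have "A $ inv cyclic_perm m = (?P ** A) $ m"
      by (simp add: perm_matrix_mult_row[OF cyclic_perm_permutes])
    also have "?P ** A = A ** (transpose A ** ?P ** A)"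
      using orth by (simp add: orthogonal_matrix_def matrix_mul_assoc)
    finally have "A $ inv cyclic_perm m = A $ m v* (transpose A ** ?P ** A)"
      by (simp add: row_matrix_mult)
    then show ?thesis
      using that orthogonal_matrix_row_unit[OF orth] cyclic by (simp add: ternary_vector_matrix_mult)
  qed
  show ?thesis
  proof (cases "\<exists>m. ternary (A $ m)")
    case True
    then obtain m where m: "ternary (A $ m)"
      by blast
    have "ternary (A $ 1) \<Longrightarrow> ternary (A $ 3)" "ternary (A $ 3) \<Longrightarrow> ternary (A $ 2)"
      "ternary (A $ 2) \<Longrightarrow> ternary (A $ 1)"
      using spread[of 1] spread[of 2] spread[of 3] by (simp_all add: inv_cyclic_perm_simps)
    with m have "ternary (A $ 1) \<and> ternary (A $ 2) \<and> ternary (A $ 3)"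
      using exhaust_3[of m] by auto
    then show ?thesis
      by (simp add: ternary_matrix_def forall_3)
  next
    case False
    then have "(A $ m $ k)^2 \<noteq> 1" for m k
      using ternary_if_unit_component[OF orthogonal_matrix_row_unit[OF orth]] by blast
    then have "(A $ m $ k)^2 \<in> {0, 1/2}" for m k
      using squares[of m k] by auto
    then have False
      by (rule not_orthogonal_matrix_half_squares[OF orth])
    then show ?thesis ..
  qed
qed

lemma SO3_iff_rotation_matrix: "R \<in> SO3 \<longleftrightarrow> rotation_matrix R"
  by (simp add: SO3_def rotation_matrix_def orthogonal_matrix)

lemma octahedral_group_if_conjugates_octahedral:
  fixes A :: mat3
  assumes "rotation_matrix A"
    and "\<And>m. transpose A ** half_turn m ** A \<in> octahedral_group"
    and "transpose A ** perm_matrix cyclic_perm ** A \<in> octahedral_group"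
  shows "A \<in> octahedral_group"
proof -
  have "orthogonal_matrix A"
    using assms(1) by (simp add: rotation_matrix_def)
  then have "ternary_matrix A"
    using assms(2,3) by (simp add: octahedral_group_iff ternary_matrix_if_conjugates_ternary)
  then show ?thesis
    using assms(1) by (simp add: octahedral_group_iff)
qed

lemma conjugate_mem_if_coset_equality:
  fixes Rij Rji Ri Rj :: "real^'n^'n"
  assumes "orthogonal_matrix Ri" "orthogonal_matrix Rj"
    and cosets: "{transpose Rij ** g ** Rji | g. g \<in> G} = {transpose Ri ** g ** Rj | g. g \<in> G}"
    and "g \<in> G"
  shows "transpose (Rij ** transpose Ri) ** g ** (Rji ** transpose Rj) \<in> G"
proof -
  have "transpose Rij ** g ** Rji \<in> {transpose Rij ** g ** Rji | g. g \<in> G}"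
    using assms(4) by blast
  then obtain g' where g': "g' \<in> G" "transpose Rij ** g ** Rji = transpose Ri ** g' ** Rj"
    unfolding cosets by blast
  have "transpose (Rij ** transpose Ri) ** g ** (Rji ** transpose Rj)
      = Ri ** (transpose Rij ** g ** Rji) ** transpose Rj"
    by (simp add: matrix_transpose_mul matrix_mul_assoc)
  also have "\<dots> = (Ri ** transpose Ri) ** g' ** (Rj ** transpose Rj)"
    by (simp add: g'(2) matrix_mul_assoc)
  also have "\<dots> = g'"
    using assms(1,2) by (simp add: orthogonal_matrix_def)
  finally show ?thesis
    using g'(1) by simp
qed

lemma coset_equality_decomposition:
  fixes G :: "mat3 set"
  assumes rotations: "Rij \<in> SO3" "Ri \<in> SO3" "Rj \<in> SO3"
    and G: "G \<subseteq> octahedral_group" "mat 1 \<in> G" "\<And>m. half_turn m \<in> G" "perm_matrix cyclic_perm \<in> G"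
    and cosets: "{transpose Rij ** g ** Rji | g. g \<in> G} = {transpose Ri ** g ** Rj | g. g \<in> G}"
  obtains A c where "A \<in> octahedral_group" "c \<in> G" "Rij = A ** Ri" "Rji = A ** c ** Rj"
proof -
  have orth: "orthogonal_matrix Ri" "orthogonal_matrix Rj"
    using rotations(2,3) by (simp_all add: SO3_iff_rotation_matrix rotation_matrix_def)
  define A where "A = Rij ** transpose Ri"
  define B where "B = Rji ** transpose Rj"
  define c where "c = transpose A ** B"
  have conj: "transpose A ** g ** B \<in> G" if "g \<in> G" for g
    unfolding A_def B_def using orth cosets that by (rule conjugate_mem_if_coset_equality)
  have c: "c \<in> G"
    using conj[OF G(2)] by (simp add: c_def)
  have rot_A: "rotation_matrix A"
    using rotations
    by (simp add: A_def SO3_iff_rotation_matrix rotation_matrix_def orthogonal_matrix_mul det_mul)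
  then have "A ** transpose A = mat 1"
    by (simp add: rotation_matrix_def orthogonal_matrix_def)
  then have B: "B = A ** c"
    by (simp add: c_def matrix_mul_assoc)
  have "c ** transpose c = mat 1"
    using c G(1) by (auto simp: octahedral_group_iff rotation_matrix_def orthogonal_matrix_def)
  then have conj_A: "transpose A ** g ** A = (transpose A ** g ** B) ** transpose c" for g
    by (simp add: B flip: matrix_mul_assoc)
  have "transpose A ** g ** A \<in> octahedral_group" if "g \<in> G" for g
    unfolding conj_A
    using subsetD[OF G(1) conj[OF that]] octahedral_group_transpose[OF subsetD[OF G(1) c]]
    by (rule octahedral_group_mult)
  then have "A \<in> octahedral_group"
    using rot_A G(3,4) by (simp add: octahedral_group_if_conjugates_octahedral)
  moreover have "Rij = A ** Ri"
    using orth(1) by (simp add: A_def orthogonal_matrix flip: matrix_mul_assoc)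
  moreover have "Rji = A ** c ** Rj"
    using orth(2) by (simp add: B_def orthogonal_matrix flip: B matrix_mul_assoc)
  ultimately show ?thesis
    using c that by blast
qed

theorem corollary1:
  fixes Rij Rji Ri Rj :: "real^3^3"
  assumes "Rij \<in> SO3" and "Rji \<in> SO3" and "Ri \<in> SO3" and "Rj \<in> SO3"
  shows "({transpose Rij ** g ** Rji | g. g \<in> tetrahedral_group} =
            {transpose Ri ** g ** Rj | g. g \<in> tetrahedral_group}
          \<longrightarrow> (\<exists>gij \<in> tetrahedral_group. \<exists>gji \<in> tetrahedral_group. \<exists>hij \<in> octahedral_group.
                 Rij = hij ** gij ** Ri \<and> Rji = hij ** gji ** Rj))
       \<and> ({transpose Rij ** g ** Rji | g. g \<in> octahedral_group} =
            {transpose Ri ** g ** Rj | g. g \<in> octahedral_group}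
          \<longrightarrow> (\<exists>gij \<in> octahedral_group. \<exists>gji \<in> octahedral_group.
                 Rij = gij ** Ri \<and> Rji = gji ** Rj))"
proof (intro conjI impI)
  assume "{transpose Rij ** g ** Rji | g. g \<in> tetrahedral_group} =
    {transpose Ri ** g ** Rj | g. g \<in> tetrahedral_group}"
  from coset_equality_decomposition[OF assms(1,3,4) tetrahedral_subset_octahedral_group
      id_in_tetrahedral_group half_turn_in_tetrahedral_group cyclic_perm_matrix_in_tetrahedral_group this]
  obtain A c where "A \<in> octahedral_group" "c \<in> tetrahedral_group" "Rij = A ** Ri" "Rji = A ** c ** Rj" .
  then show "\<exists>gij \<in> tetrahedral_group. \<exists>gji \<in> tetrahedral_group. \<exists>hij \<in> octahedral_group.
      Rij = hij ** gij ** Ri \<and> Rji = hij ** gji ** Rj"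
    using id_in_tetrahedral_group by (intro bexI[of _ "mat 1"] bexI[of _ c] bexI[of _ A]) simp_all
next
  have O_facts: "mat 1 \<in> octahedral_group" "half_turn m \<in> octahedral_group"
    "perm_matrix cyclic_perm \<in> octahedral_group" for m
    using tetrahedral_subset_octahedral_group id_in_tetrahedral_group half_turn_in_tetrahedral_group
      cyclic_perm_matrix_in_tetrahedral_group by auto
  assume "{transpose Rij ** g ** Rji | g. g \<in> octahedral_group} =
    {transpose Ri ** g ** Rj | g. g \<in> octahedral_group}"
  from coset_equality_decomposition[OF assms(1,3,4) order_refl O_facts this]
  obtain A c where "A \<in> octahedral_group" "c \<in> octahedral_group" "Rij = A ** Ri" "Rji = A ** c ** Rj" .
  then show "\<exists>gij \<in> octahedral_group. \<exists>gji \<in> octahedral_group. Rij = gij ** Ri \<and> Rji = gji ** Rj"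
    by (intro bexI[of _ A] bexI[of _ "A ** c"] octahedral_group_mult) simp_all
qed

end
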